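(* Let $f(t)=\sum_{k=0}^{D}c_k\binom{D}{k}t^k(1-t)^{D-k}$ for $t\in[0,1]$. Then: (1) $f'(t)\ge0$ for all $t\in[0,1]$. (2) If the Increasing Conditional Divergence (ICD) condition holds, i.e. $\Delta_i(S)\le\Delta_i(T)$ for all $i\in[D]$ and all $S\subseteq T\subseteq[D]\setminus\{i\}$, then $f''(t)\ge0$ for all $t\in[0,1]$. (3) If moreover the second-order ICD condition holds, i.e. $\Delta_i(S\cup\{j\})-\Delta_i(S)\le\Delta_i(S\cup\{j,\ell\})-\Delta_i(S\cup\{\ell\})$ for all distinct $i,j,\ell\in[D]$ and all $S\subseteq[D]\setminus\{i,j,\ell\}$, then $f^{(3)}(t)\ge0$ for all $t\in[0,1]$.
   Context: Let $\mathcal X$ be a finite alphabet, $D\ge1$, $[D]=\{1,\dots,D\}$, and $p_0,\pi_0$ probability distributions on $\mathcal X^D$ with $\pi_0$ of full support. For $U\subseteq[D]$ let $F(U)=\mathrm{KL}\big(p_0^{(U)}\|\pi_0^{(U)}\big)$, where $p_0^{(U)}$ is the marginal of $p_0$ on the coordinates in $U$, and $F(\emptyset)=0$. For $i\notin U$ let $\Delta_i(U)=F(U\cup\{i\})-F(U)$. For $0\le k\le D$ let $c_k=\binom{D}{k}^{-1}\sum_{|U|=k}F(U)$ (the average of $F$ over subsets of size $k$). *)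

theory Defs
  imports "HOL-Probability.Probability_Mass_Function"
begin

text \<open>Points of X^D are functions 'n => 'a, where the finite type 'n plays the
role of the coordinate set [D] (so D = CARD('n)) and the finite type 'a is the alphabet.\<close>

definition KL :: "'b::finite pmf \<Rightarrow> 'b pmf \<Rightarrow> real" where
  "KL p q = (\<Sum>y\<in>UNIV. pmf p y * ln (pmf p y / pmf q y))"

definition marg :: "'n set \<Rightarrow> ('n \<Rightarrow> 'a) pmf \<Rightarrow> ('n \<Rightarrow> 'a) pmf" where
  "marg U p = map_pmf (\<lambda>x. restrict x U) p"

definition Fdiv :: "('n::finite \<Rightarrow> 'a::finite) pmf \<Rightarrow> ('n \<Rightarrow> 'a) pmf \<Rightarrow> 'n set \<Rightarrow> real" where
  "Fdiv p0 \<pi>0 U = KL (marg U p0) (marg U \<pi>0)"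

definition Delta :: "('n::finite \<Rightarrow> 'a::finite) pmf \<Rightarrow> ('n \<Rightarrow> 'a) pmf \<Rightarrow> 'n \<Rightarrow> 'n set \<Rightarrow> real" where
  "Delta p0 \<pi>0 i U = Fdiv p0 \<pi>0 (insert i U) - Fdiv p0 \<pi>0 U"

definition cavg :: "('n::finite \<Rightarrow> 'a::finite) pmf \<Rightarrow> ('n \<Rightarrow> 'a) pmf \<Rightarrow> nat \<Rightarrow> real" where
  "cavg p0 \<pi>0 k = (\<Sum>U\<in>{U::'n set. card U = k}. Fdiv p0 \<pi>0 U) / real (CARD('n) choose k)"

definition fpoly :: "('n::finite \<Rightarrow> 'a::finite) pmf \<Rightarrow> ('n \<Rightarrow> 'a) pmf \<Rightarrow> real \<Rightarrow> real" where
  "fpoly p0 \<pi>0 t = (\<Sum>k=0..CARD('n). cavg p0 \<pi>0 k * real (CARD('n) choose k)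
                        * t ^ k * (1 - t) ^ (CARD('n) - k))"

definition ICD :: "('n::finite \<Rightarrow> 'a::finite) pmf \<Rightarrow> ('n \<Rightarrow> 'a) pmf \<Rightarrow> bool" where
  "ICD p0 \<pi>0 \<longleftrightarrow> (\<forall>i S T. S \<subseteq> T \<and> T \<subseteq> UNIV - {i} \<longrightarrow> Delta p0 \<pi>0 i S \<le> Delta p0 \<pi>0 i T)"

definition ICD2 :: "('n::finite \<Rightarrow> 'a::finite) pmf \<Rightarrow> ('n \<Rightarrow> 'a) pmf \<Rightarrow> bool" where
  "ICD2 p0 \<pi>0 \<longleftrightarrow> (\<forall>i j l S. i \<noteq> j \<and> i \<noteq> l \<and> j \<noteq> l \<and> S \<subseteq> UNIV - {i, j, l} \<longrightarrow>
      Delta p0 \<pi>0 i (insert j S) - Delta p0 \<pi>0 i S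
        \<le> Delta p0 \<pi>0 i (insert j (insert l S)) - Delta p0 \<pi>0 i (insert l S))"

end

theory Submission
  imports Defs
begin

text \<open>With F(U) the KL divergence between the U-marginals,
  f(t) = \<Sum>_U F(U) t^|U| (1 - t)^(D - |U|) is the expectation of F at a random set that contains
  each coordinate independently with probability t. Conditioning on whether a fixed coordinate
  belongs to the set shows that the derivative of such a polynomial is the sum over i of the
  polynomial of the marginal gain U \<mapsto> F(U \<union> {i}) - F(U) on the remaining coordinates.
  Hence the k-th derivative is nonnegative on [0,1] as soon as all k-th order differences of F
  along distinct coordinates are. For k = 1 this is monotonicity of F, the data processing
  inequality for marginalisation, which follows from the log-sum inequality; for k = 2 and
  k = 3 it is exactly ICD and ICD2 (so ICD2 alone already gives part (3)).\<close>

lemma log_sum_inequality: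
  fixes p q :: "'b \<Rightarrow> real"
  assumes fin: "finite Y" and p_nonneg: "\<And>y. y \<in> Y \<Longrightarrow> p y \<ge> 0"
    and q_nonneg: "\<And>y. y \<in> Y \<Longrightarrow> q y \<ge> 0"
    and support: "\<And>y. y \<in> Y \<Longrightarrow> p y > 0 \<Longrightarrow> q y > 0"
  shows "(\<Sum>y\<in>Y. p y) * ln ((\<Sum>y\<in>Y. p y) / (\<Sum>y\<in>Y. q y)) \<le> (\<Sum>y\<in>Y. p y * ln (p y / q y))"
proof (cases "(\<Sum>y\<in>Y. p y) = 0")
  case True
  then have "\<forall>y\<in>Y. p y = 0" using sum_nonneg_eq_0_iff[OF fin] p_nonneg by blast
  then show ?thesis using True by simp
next
  case False
  define Ps where "Ps = (\<Sum>y\<in>Y. p y)"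
  define Qs where "Qs = (\<Sum>y\<in>Y. q y)"
  have "Ps > 0" using False p_nonneg unfolding Ps_def by (simp add: order_le_neq_trans sum_nonneg)
  obtain y0 where y0: "y0 \<in> Y" "p y0 > 0"
    using False p_nonneg unfolding Ps_def by (metis less_eq_real_def sum.neutral)
  have "q y0 \<le> Qs" unfolding Qs_def using fin y0 q_nonneg by (intro member_le_sum) auto
  then have "Qs > 0" using support[OF y0] by linarith
  have pointwise: "p y - q y * Ps / Qs \<le> p y * ln (p y / q y) - p y * ln (Ps / Qs)"
    if y: "y \<in> Y" for y
  proof (cases "p y = 0")
    case True
    then show ?thesis using q_nonneg[OF y] \<open>Ps > 0\<close> \<open>Qs > 0\<close> by simp
  next
    case False
    then have "p y > 0" using p_nonneg[OF y] by simp
    moreover have "q y > 0" using support[OF y \<open>p y > 0\<close>] .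
    ultimately have "(q y * Ps) / (p y * Qs) > 0"
      using \<open>Ps > 0\<close> \<open>Qs > 0\<close> by simp
    then have "ln ((q y * Ps) / (p y * Qs)) \<le> (q y * Ps) / (p y * Qs) - 1"
      by (rule ln_le_minus_one)
    moreover have "ln ((q y * Ps) / (p y * Qs)) = ln (Ps / Qs) - ln (p y / q y)"
      using \<open>p y > 0\<close> \<open>q y > 0\<close> \<open>Ps > 0\<close> \<open>Qs > 0\<close> by (simp add: ln_div ln_mult)
    ultimately have "1 - (q y * Ps) / (p y * Qs) \<le> ln (p y / q y) - ln (Ps / Qs)"
      by linarith
    then have "p y * (1 - (q y * Ps) / (p y * Qs)) \<le> p y * (ln (p y / q y) - ln (Ps / Qs))"
      using \<open>p y > 0\<close> by (simp add: mult_left_mono)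
    then show ?thesis using \<open>p y > 0\<close> \<open>Qs > 0\<close> by (simp add: algebra_simps)
  qed
  have "0 = (\<Sum>y\<in>Y. p y - q y * Ps / Qs)"
    using \<open>Qs > 0\<close> by (simp add: sum_subtractf sum_divide_distrib[symmetric]
        sum_distrib_right[symmetric] Ps_def Qs_def)
  also have "\<dots> \<le> (\<Sum>y\<in>Y. p y * ln (p y / q y) - p y * ln (Ps / Qs))"
    using pointwise by (rule sum_mono)
  also have "\<dots> = (\<Sum>y\<in>Y. p y * ln (p y / q y)) - Ps * ln (Ps / Qs)"
    by (simp add: sum_subtractf sum_distrib_right[symmetric] Ps_def)
  finally show ?thesis unfolding Ps_def Qs_def by linarith
qed

lemma pmf_map_pmf_finite:
  "pmf (map_pmf h (p :: 'b::finite pmf)) z = (\<Sum>y\<in>{y. h y = z}. pmf p y)"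
  by (simp add: pmf_map measure_measure_pmf_finite vimage_def)

lemma KL_map_pmf_le:
  fixes p q :: "'b::finite pmf" and h :: "'b \<Rightarrow> 'c::finite"
  assumes "set_pmf p \<subseteq> set_pmf q"
  shows "KL (map_pmf h p) (map_pmf h q) \<le> KL p q"
proof -
  have "KL (map_pmf h p) (map_pmf h q)
      = (\<Sum>z\<in>UNIV. (\<Sum>y\<in>{y. h y = z}. pmf p y)
           * ln ((\<Sum>y\<in>{y. h y = z}. pmf p y) / (\<Sum>y\<in>{y. h y = z}. pmf q y)))"
    unfolding KL_def pmf_map_pmf_finite ..
  also have "\<dots> \<le> (\<Sum>z\<in>UNIV. (\<Sum>y\<in>{y. h y = z}. pmf p y * ln (pmf p y / pmf q y)))"
  proof (intro sum_mono log_sum_inequality)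
    fix y assume "0 < pmf p y"
    then show "0 < pmf q y" using assms by (metis pmf_positive set_pmf_iff subsetD)
  qed auto
  also have "\<dots> = KL p q"
    unfolding KL_def
    using sum.group[of UNIV UNIV h "\<lambda>y. pmf p y * ln (pmf p y / pmf q y)"] by simp
  finally show ?thesis .
qed

lemma Fdiv_mono:
  fixes p0 \<pi>0 :: "('n::finite \<Rightarrow> 'a::finite) pmf"
  assumes "set_pmf \<pi>0 = UNIV" and "U \<subseteq> V"
  shows "Fdiv p0 \<pi>0 U \<le> Fdiv p0 \<pi>0 V"
proof -
  have "marg U p = map_pmf (\<lambda>x. restrict x U) (marg V p)" for p :: "('n \<Rightarrow> 'a) pmf"
    unfolding marg_def map_pmf_comp using \<open>U \<subseteq> V\<close> by (auto simp: Int_absorb1 intro: map_pmf_cong)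
  moreover have "set_pmf (marg V p0) \<subseteq> set_pmf (marg V \<pi>0)"
    unfolding marg_def using assms(1) by auto
  ultimately show ?thesis unfolding Fdiv_def by (metis KL_map_pmf_le)
qed

definition subset_bernstein :: "'n set \<Rightarrow> ('n set \<Rightarrow> real) \<Rightarrow> real \<Rightarrow> real" where
  "subset_bernstein A G t = (\<Sum>U\<in>Pow A. G U * t ^ card U * (1 - t) ^ (card A - card U))"

definition gain :: "'n \<Rightarrow> ('n set \<Rightarrow> real) \<Rightarrow> 'n set \<Rightarrow> real" where
  "gain i G U = G (insert i U) - G U"

lemma gain_Fdiv: "gain i (Fdiv p0 \<pi>0) = Delta p0 \<pi>0 i"
  by (simp add: fun_eq_iff gain_def Delta_def)

lemma subset_bernstein_insert:
  assumes "finite A" and "a \<notin> A"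
  shows "subset_bernstein (insert a A) G t
       = (1 - t) * subset_bernstein A G t + t * subset_bernstein A (\<lambda>U. G (insert a U)) t"
proof -
  let ?term = "\<lambda>U. G U * t ^ card U * (1 - t) ^ (card (insert a A) - card U)"
  have inj: "inj_on (insert a) (Pow A)" using assms(2) by (auto simp: inj_on_def)
  have "subset_bernstein (insert a A) G t = sum ?term (Pow A) + sum ?term (insert a ` Pow A)"
    unfolding subset_bernstein_def Pow_insert using assms by (intro sum.union_disjoint) auto
  also have "sum ?term (Pow A) = (1 - t) * subset_bernstein A G t"
    unfolding subset_bernstein_def sum_distrib_left
  proof (intro sum.cong refl)
    fix U assume "U \<in> Pow A"
    then have "card (insert a A) - card U = Suc (card A - card U)"
      using assms by (simp add: Suc_diff_le card_mono)
    then show "?term U = (1 - t) * (G U * t ^ card U * (1 - t) ^ (card A - card U))" by simp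
  qed
  also have "sum ?term (insert a ` Pow A) = t * subset_bernstein A (\<lambda>U. G (insert a U)) t"
    unfolding sum.reindex[OF inj] subset_bernstein_def sum_distrib_left o_def
  proof (intro sum.cong refl)
    fix U assume "U \<in> Pow A"
    then have "card (insert a U) = Suc (card U)"
      using assms by (auto simp: finite_subset card_insert_if)
    then show "?term (insert a U) = t * (G (insert a U) * t ^ card U * (1 - t) ^ (card A - card U))"
      using assms by simp
  qed
  finally show ?thesis .
qed

lemma subset_bernstein_diff:
  "subset_bernstein A (\<lambda>U. G U - H U) t = subset_bernstein A G t - subset_bernstein A H t"
  unfolding subset_bernstein_def by (simp add: sum_subtractf[symmetric] algebra_simps)

lemma subset_bernstein_nonneg:
  assumes "t \<in> {0..1}" and "\<And>U. U \<subseteq> A \<Longrightarrow> G U \<ge> 0"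
  shows "subset_bernstein A G t \<ge> 0"
  unfolding subset_bernstein_def using assms by (intro sum_nonneg mult_nonneg_nonneg) auto

lemma has_real_derivative_subset_bernstein:
  assumes "finite A"
  shows "(subset_bernstein A G has_real_derivative
           (\<Sum>i\<in>A. subset_bernstein (A - {i}) (gain i G) t)) (at t)"
  using assms
proof (induction A arbitrary: G t rule: finite_induct)
  case empty
  have "subset_bernstein {} G = (\<lambda>t. G {})" by (auto simp: subset_bernstein_def fun_eq_iff)
  then show ?case by simp
next
  case (insert a A)
  let ?B = "subset_bernstein A" and ?Ga = "\<lambda>U. G (insert a U)"
  let ?dB = "\<lambda>H. \<Sum>i\<in>A. subset_bernstein (A - {i}) (gain i H) t"
  have split: "subset_bernstein (insert a A) G = (\<lambda>t. (1 - t) * ?B G t + t * ?B ?Ga t)"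
    using subset_bernstein_insert[OF insert(1,2)] by (simp add: fun_eq_iff)
  have "((\<lambda>t. (1 - t) * ?B G t + t * ?B ?Ga t) has_real_derivative
      - ?B G t + (1 - t) * ?dB G + (?B ?Ga t + t * ?dB ?Ga)) (at t)"
    by (rule derivative_eq_intros insert(3) | simp)+
  moreover have "(\<Sum>i\<in>insert a A. subset_bernstein (insert a A - {i}) (gain i G) t)
      = - ?B G t + (1 - t) * ?dB G + (?B ?Ga t + t * ?dB ?Ga)"
  proof -
    have insert_step: "subset_bernstein (insert a (A - {i})) (gain i G) t
        = (1 - t) * subset_bernstein (A - {i}) (gain i G) t
          + t * subset_bernstein (A - {i}) (gain i ?Ga) t" for i
    proof -
      have "gain i ?Ga = (\<lambda>U. gain i G (insert a U))"
        by (auto simp: gain_def fun_eq_iff insert_commute)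
      then show ?thesis using insert(1,2) by (simp add: subset_bernstein_insert)
    qed
    have "(\<Sum>i\<in>insert a A. subset_bernstein (insert a A - {i}) (gain i G) t)
        = ?B (gain a G) t + (\<Sum>i\<in>A. subset_bernstein (insert a (A - {i})) (gain i G) t)"
      using insert(1,2) by (auto simp: insert_Diff_if intro!: sum.cong)
    also have "?B (gain a G) t = ?B ?Ga t - ?B G t"
      unfolding gain_def by (rule subset_bernstein_diff)
    also have "(\<Sum>i\<in>A. subset_bernstein (insert a (A - {i})) (gain i G) t)
        = (1 - t) * ?dB G + t * ?dB ?Ga"
      unfolding insert_step by (simp add: sum.distrib sum_distrib_left)
    finally show ?thesis by simp
  qed
  ultimately show ?case
    unfolding split by simp
qed

primrec subset_bernstein_deriv :: "nat \<Rightarrow> 'n set \<Rightarrow> ('n set \<Rightarrow> real) \<Rightarrow> real \<Rightarrow> real" where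
  "subset_bernstein_deriv 0 A G = subset_bernstein A G"
| "subset_bernstein_deriv (Suc k) A G =
     (\<lambda>t. \<Sum>i\<in>A. subset_bernstein_deriv k (A - {i}) (gain i G) t)"

primrec nonneg_iterated_gains :: "nat \<Rightarrow> 'n set \<Rightarrow> ('n set \<Rightarrow> real) \<Rightarrow> bool" where
  "nonneg_iterated_gains 0 A G \<longleftrightarrow> (\<forall>U\<subseteq>A. 0 \<le> G U)"
| "nonneg_iterated_gains (Suc k) A G \<longleftrightarrow> (\<forall>i\<in>A. nonneg_iterated_gains k (A - {i}) (gain i G))"

lemma has_real_derivative_subset_bernstein_deriv:
  assumes "finite A"
  shows "(subset_bernstein_deriv k A G has_real_derivative
           subset_bernstein_deriv (Suc k) A G t) (at t)"
  using assms
proof (induction k arbitrary: A G)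
  case 0
  then show ?case using has_real_derivative_subset_bernstein by simp
next
  case (Suc k)
  have "((\<lambda>t. \<Sum>i\<in>A. subset_bernstein_deriv k (A - {i}) (gain i G) t) has_real_derivative
      (\<Sum>i\<in>A. subset_bernstein_deriv (Suc k) (A - {i}) (gain i G) t)) (at t)"
    using Suc by (intro DERIV_sum) auto
  then show ?case
    unfolding subset_bernstein_deriv.simps(2)[of "Suc k" A G] subset_bernstein_deriv.simps(2)[of k A G] .
qed

lemma higher_deriv_subset_bernstein:
  assumes "finite A"
  shows "(deriv ^^ k) (subset_bernstein A G) = subset_bernstein_deriv k A G"
proof (induction k)
  case 0
  show ?case by simp
next
  case (Suc k)
  have "deriv (subset_bernstein_deriv k A G) = subset_bernstein_deriv (Suc k) A G"
    by (rule ext, rule DERIV_imp_deriv, rule has_real_derivative_subset_bernstein_deriv[OF assms])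
  then show ?case by (simp only: funpow.simps comp_apply Suc.IH)
qed

lemma subset_bernstein_deriv_nonneg:
  assumes "nonneg_iterated_gains k A G" and "t \<in> {0..1}"
  shows "subset_bernstein_deriv k A G t \<ge> 0"
  using assms(1)
proof (induction k arbitrary: A G)
  case 0
  then show ?case by (auto intro: subset_bernstein_nonneg[OF assms(2)])
next
  case (Suc k)
  then show ?case by (auto intro: sum_nonneg)
qed

lemma higher_deriv_subset_bernstein_nonneg:
  assumes "finite A" and "nonneg_iterated_gains k A G" and "t \<in> {0..1}"
  shows "(deriv ^^ k) (subset_bernstein A G) t \<ge> 0"
  using assms by (simp add: higher_deriv_subset_bernstein subset_bernstein_deriv_nonneg)

lemma fpoly_eq_subset_bernstein:
  fixes p0 \<pi>0 :: "('n::finite \<Rightarrow> 'a::finite) pmf"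
  shows "fpoly p0 \<pi>0 = subset_bernstein UNIV (Fdiv p0 \<pi>0)"
proof
  fix t
  let ?F = "Fdiv p0 \<pi>0" and ?D = "CARD('n)"
  let ?term = "\<lambda>U. ?F U * t ^ card U * (1 - t) ^ (?D - card U)"
  have "cavg p0 \<pi>0 k * real (?D choose k) = (\<Sum>U | card U = k. ?F U)" if "k \<le> ?D" for k
    using that by (simp add: cavg_def)
  then have "fpoly p0 \<pi>0 t = (\<Sum>k\<in>{0..?D}. \<Sum>U\<in>{U\<in>UNIV. card U = k}. ?term U)"
    unfolding fpoly_def by (auto simp: sum_distrib_right intro!: sum.cong)
  also have "\<dots> = (\<Sum>U\<in>UNIV. ?term U)"
    by (rule sum.group) (auto simp: card_mono)
  finally show "fpoly p0 \<pi>0 t = subset_bernstein UNIV ?F t"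
    unfolding subset_bernstein_def by simp
qed

lemma nonneg_iterated_gains_1_Fdiv:
  fixes p0 \<pi>0 :: "('n::finite \<Rightarrow> 'a::finite) pmf"
  assumes "set_pmf \<pi>0 = UNIV"
  shows "nonneg_iterated_gains 1 UNIV (Fdiv p0 \<pi>0)"
  using Fdiv_mono[OF assms] by (simp add: gain_def subset_insertI)

lemma ICD_imp_nonneg_iterated_gains_2:
  assumes "ICD p0 \<pi>0"
  shows "nonneg_iterated_gains 2 UNIV (Fdiv p0 \<pi>0)"
proof -
  have "Delta p0 \<pi>0 i U \<le> Delta p0 \<pi>0 i (insert j U)" if "j \<noteq> i" "U \<subseteq> UNIV - {i} - {j}" for i j U
  proof -
    have "U \<subseteq> insert j U \<and> insert j U \<subseteq> UNIV - {i}" using that by auto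
    then show ?thesis using assms unfolding ICD_def by blast
  qed
  then show ?thesis by (simp add: numeral_2_eq_2 gain_Fdiv gain_def)
qed

lemma ICD2_imp_nonneg_iterated_gains_3:
  assumes "ICD2 p0 \<pi>0"
  shows "nonneg_iterated_gains 3 UNIV (Fdiv p0 \<pi>0)"
proof -
  have "Delta p0 \<pi>0 i (insert j U) - Delta p0 \<pi>0 i U
      \<le> Delta p0 \<pi>0 i (insert j (insert l U)) - Delta p0 \<pi>0 i (insert l U)"
    if "j \<noteq> i" "l \<noteq> i" "l \<noteq> j" "U \<subseteq> UNIV - {i} - {j} - {l}" for i j l U
  proof -
    have "i \<noteq> j \<and> i \<noteq> l \<and> j \<noteq> l \<and> U \<subseteq> UNIV - {i, j, l}" using that by auto
    then show ?thesis using assms unfolding ICD2_def by blast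
  qed
  then show ?thesis by (simp add: numeral_3_eq_3 gain_Fdiv gain_def insert_commute)
qed

theorem mainTheorem6:
  fixes p0 \<pi>0 :: "('n::finite \<Rightarrow> 'a::finite) pmf"
  assumes full: "set_pmf \<pi>0 = UNIV"
  shows "(\<forall>t\<in>{0..1}. deriv (fpoly p0 \<pi>0) t \<ge> 0)
       \<and> (ICD p0 \<pi>0 \<longrightarrow> (\<forall>t\<in>{0..1}. (deriv ^^ 2) (fpoly p0 \<pi>0) t \<ge> 0))
       \<and> (ICD p0 \<pi>0 \<and> ICD2 p0 \<pi>0 \<longrightarrow> (\<forall>t\<in>{0..1}. (deriv ^^ 3) (fpoly p0 \<pi>0) t \<ge> 0))"
proof -
  have "deriv f = (deriv ^^ 1) f" for f :: "real \<Rightarrow> real" by simp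
  then show ?thesis
    using nonneg_iterated_gains_1_Fdiv[OF full] ICD_imp_nonneg_iterated_gains_2
      ICD2_imp_nonneg_iterated_gains_3
    unfolding fpoly_eq_subset_bernstein
    by (metis finite higher_deriv_subset_bernstein_nonneg)
qed

end
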